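(* Let $\mathcal I$ index a finite set of strategies for the iterated Prisoner's Dilemma. Suppose that the strategy indexed by $i^*\in\mathcal I$ consists of a good memory-one strategy vector $\mathbf p^{i^*}$ together with initial cooperation, and that for no other $j\in\mathcal I$ is the strategy vector $\mathbf p^j$ agreeable. Then $i^*$ is an evolutionarily stable strategy for the game $\{A_{ij}:i,j\in\mathcal I\}$, and the vertex $v(i^* )$ is an attractor (a locally asymptotically stable equilibrium) of the replicator dynamics.
   Context: Iterated Prisoner's Dilemma: payoffs $T>R>P>S$ with $2R>T+S$; outcomes ordered $cc,cd,dc,dd$ (first letter X's play, second Y's; $c$ = cooperate, $d$ = defect); payoff vectors $\mathbf S_X=(R,S,T,P)$, $\mathbf S_Y=(R,T,S,P)$. A memory-one strategy vector is $\mathbf p\in[0,1]^4$, $p_i$ being the probability of playing $c$ after the $i$-th outcome, where outcomes are labeled from the player's own perspective (own play first); it is agreeable if $p_1=1$. A strategy is such a vector together with an initial play (probability of $c$ in round one). For a strategy pattern of the opponent (any possibly random, history-dependent rule), a limit distribution is a limit point $\mathbf v$ of the Cesàro averages of the round-$n$ outcome distributions, with payoffs $s_X=\langle\mathbf v\cdot\mathbf S_X\rangle$, $s_Y=\langle\mathbf v\cdot\mathbf S_Y\rangle$. A memory-one $\mathbf p$ for X is good if it is agreeable and for every strategy pattern of Y and every associated limit distribution $s_Y\ge R$ implies $s_Y=s_X=R$. For $i,j\in\mathcal I$, $A_{ij}$ is the long-run average payoff $s_X$ of X when X uses strategy $i$ and Y uses strategy $j$ (the Cesàro limit exists). Replicator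 dynamics: on the simplex $\Delta=\{\pi\in\mathbb R^{\mathcal I}:\pi_i\ge0,\sum\pi_i=1\}$, $\frac{d\pi_i}{dt}=\pi_i(A_{i\pi}-A_{\pi\pi})$ with $A_{i\pi}=\sum_j\pi_jA_{ij}$, $A_{\pi\pi}=\sum_i\pi_iA_{i\pi}$; $v(i)$ is the vertex with $\pi_i=1$. $i^*$ is an evolutionarily stable strategy (ESS) if $A_{ji^*}<A_{i^*i^*}$ for all $j\neq i^*$. *)

theory Defs
  imports "HOL-Analysis.Analysis"
begin

text \<open>Outcomes in the order cc, cd, dc, dd (first letter: X's play, second: Y's).\<close>
datatype outcome = CC | CD | DC | DD

lemma UNIV_outcome: "(UNIV :: outcome set) = {CC, CD, DC, DD}"
  using outcome.exhaust by auto

instance outcome :: finite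
  by standard (simp add: UNIV_outcome)

fun xcoop :: "outcome \<Rightarrow> bool" where
  "xcoop CC = True" | "xcoop CD = True" | "xcoop DC = False" | "xcoop DD = False"

fun ycoop :: "outcome \<Rightarrow> bool" where
  "ycoop CC = True" | "ycoop CD = False" | "ycoop DC = True" | "ycoop DD = False"

fun swap_outcome :: "outcome \<Rightarrow> outcome" where
  "swap_outcome CC = CC" | "swap_outcome CD = DC" | "swap_outcome DC = CD" | "swap_outcome DD = DD"

fun SX :: "real \<Rightarrow> real \<Rightarrow> real \<Rightarrow> real \<Rightarrow> outcome \<Rightarrow> real" where
  "SX T R P S CC = R" | "SX T R P S CD = S" | "SX T R P S DC = T" | "SX T R P S DD = P"

fun SY :: "real \<Rightarrow> real \<Rightarrow> real \<Rightarrow> real \<Rightarrow> outcome \<Rightarrow> real" where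
  "SY T R P S CC = R" | "SY T R P S CD = T" | "SY T R P S DC = S" | "SY T R P S DD = P"

definition PD_payoffs :: "real \<Rightarrow> real \<Rightarrow> real \<Rightarrow> real \<Rightarrow> bool" where
  "PD_payoffs T R P S \<longleftrightarrow> T > R \<and> R > P \<and> P > S \<and> 2 * R > T + S"

text \<open>Memory-one strategy vectors: p w = probability of cooperating after outcome w
  (labelled from the player's own perspective).\<close>
definition memory_one :: "(outcome \<Rightarrow> real) \<Rightarrow> bool" where
  "memory_one p \<longleftrightarrow> (\<forall>w. 0 \<le> p w \<and> p w \<le> 1)"

definition agreeable :: "(outcome \<Rightarrow> real) \<Rightarrow> bool" where
  "agreeable p \<longleftrightarrow> p CC = 1"

text \<open>A strategy pattern for Y: a (behavioural) history-dependent random rule, giving the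
  probability that Y cooperates after a given history.  Histories are lists of outcomes
  (X's perspective), most recent outcome first.\<close>
definition strategy_pattern :: "(outcome list \<Rightarrow> real) \<Rightarrow> bool" where
  "strategy_pattern \<sigma> \<longleftrightarrow> (\<forall>h. 0 \<le> \<sigma> h \<and> \<sigma> h \<le> 1)"

definition prob_play :: "real \<Rightarrow> bool \<Rightarrow> real" where
  "prob_play q c = (if c then q else 1 - q)"

definition mem1_coop :: "(outcome \<Rightarrow> real) \<Rightarrow> real \<Rightarrow> outcome list \<Rightarrow> real" where
  "mem1_coop p x0 h = (case h of [] \<Rightarrow> x0 | w # _ \<Rightarrow> p w)"

text \<open>The pattern of a memory-one strategy (q, y0) used by Y: Y labels outcomes from its
  own perspective, hence the swap.\<close>
definition mem1_pattern :: "(outcome \<Rightarrow> real) \<Rightarrow> real \<Rightarrow> outcome list \<Rightarrow> real" where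
  "mem1_pattern q y0 h = (case h of [] \<Rightarrow> y0 | w # _ \<Rightarrow> q (swap_outcome w))"

fun hist_prob :: "(outcome \<Rightarrow> real) \<Rightarrow> real \<Rightarrow> (outcome list \<Rightarrow> real) \<Rightarrow> outcome list \<Rightarrow> real" where
  "hist_prob p x0 \<sigma> [] = 1"
| "hist_prob p x0 \<sigma> (w # h) =
     hist_prob p x0 \<sigma> h * prob_play (mem1_coop p x0 h) (xcoop w) * prob_play (\<sigma> h) (ycoop w)"

text \<open>Outcome distribution of round n+1 (n = number of previous rounds).\<close>
definition round_dist :: "(outcome \<Rightarrow> real) \<Rightarrow> real \<Rightarrow> (outcome list \<Rightarrow> real) \<Rightarrow> nat \<Rightarrow> outcome \<Rightarrow> real" where
  "round_dist p x0 \<sigma> n w = (\<Sum>h\<in>{h. length h = n}. hist_prob p x0 \<sigma> (w # h))"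

definition cesaro_dist :: "(outcome \<Rightarrow> real) \<Rightarrow> real \<Rightarrow> (outcome list \<Rightarrow> real) \<Rightarrow> nat \<Rightarrow> outcome \<Rightarrow> real" where
  "cesaro_dist p x0 \<sigma> N w = (\<Sum>n<N. round_dist p x0 \<sigma> n w) / real N"

definition limit_dist :: "(outcome \<Rightarrow> real) \<Rightarrow> real \<Rightarrow> (outcome list \<Rightarrow> real) \<Rightarrow> (outcome \<Rightarrow> real) \<Rightarrow> bool" where
  "limit_dist p x0 \<sigma> v \<longleftrightarrow>
     (\<exists>r. strict_mono r \<and> (\<forall>w. (\<lambda>k. cesaro_dist p x0 \<sigma> (r k) w) \<longlonglongrightarrow> v w))"

definition sX :: "real \<Rightarrow> real \<Rightarrow> real \<Rightarrow> real \<Rightarrow> (outcome \<Rightarrow> real) \<Rightarrow> real" where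
  "sX T R P S v = (\<Sum>w\<in>UNIV. v w * SX T R P S w)"

definition sY :: "real \<Rightarrow> real \<Rightarrow> real \<Rightarrow> real \<Rightarrow> (outcome \<Rightarrow> real) \<Rightarrow> real" where
  "sY T R P S v = (\<Sum>w\<in>UNIV. v w * SY T R P S w)"

definition good :: "real \<Rightarrow> real \<Rightarrow> real \<Rightarrow> real \<Rightarrow> (outcome \<Rightarrow> real) \<Rightarrow> bool" where
  "good T R P S p \<longleftrightarrow> agreeable p \<and>
     (\<forall>x0 \<in> {0..1}. \<forall>\<sigma>. strategy_pattern \<sigma> \<longrightarrow>
        (\<forall>v. limit_dist p x0 \<sigma> v \<longrightarrow> sY T R P S v \<ge> R \<longrightarrow>
               sY T R P S v = R \<and> sX T R P S v = R))"

definition game_matrix ::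
  "real \<Rightarrow> real \<Rightarrow> real \<Rightarrow> real \<Rightarrow> ('i \<Rightarrow> outcome \<Rightarrow> real) \<Rightarrow> ('i \<Rightarrow> real) \<Rightarrow> 'i \<Rightarrow> 'i \<Rightarrow> real" where
  "game_matrix T R P S p x0 i j =
     lim (\<lambda>N. sX T R P S (cesaro_dist (p i) (x0 i) (mem1_pattern (p j) (x0 j)) N))"

definition ESS :: "('i \<Rightarrow> 'i \<Rightarrow> real) \<Rightarrow> 'i \<Rightarrow> bool" where
  "ESS A i\<^sub>0 \<longleftrightarrow> (\<forall>j. j \<noteq> i\<^sub>0 \<longrightarrow> A j i\<^sub>0 < A i\<^sub>0 i\<^sub>0)"

definition rep_simplex :: "(real ^ 'i::finite) set" where
  "rep_simplex = {\<pi>. (\<forall>i. 0 \<le> \<pi> $ i) \<and> (\<Sum>i\<in>UNIV. \<pi> $ i) = 1}"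

definition vertex :: "'i::finite \<Rightarrow> real ^ 'i" where
  "vertex i = (\<chi> j. if j = i then 1 else 0)"

definition A_vec :: "('i::finite \<Rightarrow> 'i \<Rightarrow> real) \<Rightarrow> 'i \<Rightarrow> real ^ 'i \<Rightarrow> real" where
  "A_vec A i \<pi> = (\<Sum>j\<in>UNIV. \<pi> $ j * A i j)"

definition A_avg :: "('i::finite \<Rightarrow> 'i \<Rightarrow> real) \<Rightarrow> real ^ 'i \<Rightarrow> real" where
  "A_avg A \<pi> = (\<Sum>i\<in>UNIV. \<pi> $ i * A_vec A i \<pi>)"

definition replicator :: "('i::finite \<Rightarrow> 'i \<Rightarrow> real) \<Rightarrow> real ^ 'i \<Rightarrow> real ^ 'i" where
  "replicator A \<pi> = (\<chi> i. \<pi> $ i * (A_vec A i \<pi> - A_avg A \<pi>))"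

definition replicator_solution :: "('i::finite \<Rightarrow> 'i \<Rightarrow> real) \<Rightarrow> (real \<Rightarrow> real ^ 'i) \<Rightarrow> bool" where
  "replicator_solution A x \<longleftrightarrow>
     (\<forall>t\<ge>0. (x has_vector_derivative replicator A (x t)) (at t within {0..}))"

definition replicator_attractor :: "('i::finite \<Rightarrow> 'i \<Rightarrow> real) \<Rightarrow> real ^ 'i \<Rightarrow> bool" where
  "replicator_attractor A e \<longleftrightarrow>
     e \<in> rep_simplex \<and> replicator A e = 0 \<and>
     (\<forall>\<epsilon>>0. \<exists>\<delta>>0. \<forall>x. replicator_solution A x \<and> x 0 \<in> rep_simplex \<and> dist (x 0) e < \<delta> \<longrightarrow>
        (\<forall>t\<ge>0. dist (x t) e < \<epsilon>)) \<and>
     (\<exists>\<delta>>0. \<forall>x. replicator_solution A x \<and> x 0 \<in> rep_simplex \<and> dist (x 0) e < \<delta> \<longrightarrow>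
        (x \<longlongrightarrow> e) at_top)"

end

theory Submission
  imports Defs
begin

text \<open>Two memory-one strategies playing each other generate a Markov chain on the four outcomes;
  the Cesaro averages of the powers of a stochastic matrix converge, so the play has a unique
  limit distribution, stationary for the chain, and \<open>A\<^sub>i\<^sub>j\<close> is X's payoff under it.
  If a rival \<open>j\<close> earned at least \<open>R\<close> against \<open>i\<^sup>*\<close>, then, read from \<open>i\<^sup>*\<close>'s side, this is a
  limit distribution in which the opponent earns at least \<open>R\<close>; goodness forces both payoffs to
  be \<open>R\<close>, which in a Prisoner's Dilemma only the point mass on \<open>cc\<close> achieves, and stationarity of
  that point mass forces \<open>p\<^sup>j\<^sub>1 = 1\<close>. Hence \<open>i\<^sup>*\<close> is an ESS.

  For the replicator dynamics, the strict ESS inequalities persist near the vertex as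
  \<open>A\<^sub>i\<^sub>\<pi> - A\<^sub>\<pi>\<^sub>\<pi> \<ge> c (1 - \<pi>\<^sub>i)\<close> with \<open>i = i\<^sup>*\<close>, so \<open>1 - \<pi>\<^sub>i\<close> decays exponentially along
  solutions starting close to the vertex, giving stability and attraction.\<close>

section \<open>Cesaro averages of stochastic matrices\<close>

definition stochastic_matrix :: "real^'n::finite^'n \<Rightarrow> bool" where
  "stochastic_matrix M \<longleftrightarrow> (\<forall>i j. 0 \<le> M $ i $ j) \<and> (\<forall>i. (\<Sum>j\<in>UNIV. M $ i $ j) = 1)"

primrec matpow :: "'a::semiring_1^'n::finite^'n \<Rightarrow> nat \<Rightarrow> 'a^'n^'n" where
  "matpow M 0 = mat 1"
| "matpow M (Suc n) = matpow M n ** M"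

definition cesaro_matrix :: "real^'n::finite^'n \<Rightarrow> nat \<Rightarrow> real^'n^'n" where
  "cesaro_matrix M N = (1 / real N) *\<^sub>R (\<Sum>n<N. matpow M n)"

lemma matrix_mult_sum_left:
  "(\<Sum>n\<in>A. f n) ** (B :: 'a::semiring_1^'m^'k) = (\<Sum>n\<in>A. f n ** B)"
  unfolding vec_eq_iff matrix_matrix_mult_def
  by (simp add: sum_distrib_right) (intro allI sum.swap)

lemma matrix_mult_sum_right:
  "(B :: 'a::semiring_1^'m^'k) ** (\<Sum>n\<in>A. f n) = (\<Sum>n\<in>A. B ** f n)"
  unfolding vec_eq_iff matrix_matrix_mult_def
  by (simp add: sum_distrib_left) (intro allI sum.swap)

lemma matpow_commute: "M ** matpow M n = matpow M n ** M"
  by (induction n) (simp_all add: matrix_mul_assoc)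

lemma stochastic_matrix_mat_1: "stochastic_matrix (mat 1)"
  by (simp add: stochastic_matrix_def mat_def)

lemma stochastic_matrix_mult:
  assumes "stochastic_matrix A" "stochastic_matrix B"
  shows "stochastic_matrix (A ** B)"
proof -
  have "(\<Sum>j\<in>UNIV. (A ** B) $ i $ j) = (\<Sum>k\<in>UNIV. A $ i $ k * (\<Sum>j\<in>UNIV. B $ k $ j))" for i
    unfolding matrix_matrix_mult_def by (simp add: sum_distrib_left) (rule sum.swap)
  with assms show ?thesis
    by (auto simp: stochastic_matrix_def matrix_matrix_mult_def intro!: sum_nonneg)
qed

lemma stochastic_matrix_matpow: "stochastic_matrix M \<Longrightarrow> stochastic_matrix (matpow M n)"
  by (induction n) (auto simp: stochastic_matrix_mat_1 stochastic_matrix_mult)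

lemma stochastic_matrix_cesaro_matrix:
  assumes "stochastic_matrix M" "N > 0"
  shows "stochastic_matrix (cesaro_matrix M N)"
proof -
  have "(\<Sum>j\<in>UNIV. (\<Sum>n<N. matpow M n) $ i $ j) = real N" for i
    using stochastic_matrix_matpow[OF assms(1)]
    by (simp add: stochastic_matrix_def) (subst sum.swap, simp)
  with assms stochastic_matrix_matpow[OF assms(1)] show ?thesis
    by (auto simp: stochastic_matrix_def cesaro_matrix_def
        simp flip: sum_divide_distrib intro!: sum_nonneg divide_nonneg_nonneg)
qed

lemma norm_stochastic_matrix_le:
  fixes M :: "real^'n::finite^'n"
  assumes "stochastic_matrix M"
  shows "norm M \<le> CARD('n)"
proof -
  have "norm M \<le> (\<Sum>i\<in>UNIV. norm (M $ i))"
    unfolding norm_vec_def by (rule L2_set_le_sum) simp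
  also have "\<dots> \<le> (\<Sum>i\<in>UNIV. \<Sum>j\<in>UNIV. \<bar>M $ i $ j\<bar>)"
    by (intro sum_mono norm_le_l1_cart)
  also have "\<dots> = CARD('n)"
    using assms by (simp add: stochastic_matrix_def)
  finally show ?thesis .
qed

lemma bounded_range_cesaro_matrix:
  assumes "stochastic_matrix (M :: real^'n::finite^'n)"
  shows "bounded (range (cesaro_matrix M))"
proof -
  have "norm (cesaro_matrix M N) \<le> CARD('n)" for N
    using norm_stochastic_matrix_le[OF stochastic_matrix_cesaro_matrix[OF assms]]
    by (cases "N = 0") (simp_all add: cesaro_matrix_def)
  then show ?thesis by (auto simp: bounded_iff)
qed

lemma cesaro_matrix_mult_right:
  "cesaro_matrix M N ** M = cesaro_matrix M N + (1 / real N) *\<^sub>R (matpow M N - mat 1)"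
proof -
  have "(\<Sum>n<N. matpow M n) ** M = (\<Sum>n<N. matpow M (Suc n))"
    by (simp add: matrix_mult_sum_left)
  also have "\<dots> = (\<Sum>n<N. matpow M n) + (matpow M N - matpow M 0)"
    using sum_lessThan_telescope[of "matpow M" N] by (simp add: sum_subtractf algebra_simps)
  finally have "(\<Sum>n<N. matpow M n) ** M = (\<Sum>n<N. matpow M n) + (matpow M N - mat 1)"
    by simp
  then show ?thesis
    by (simp add: cesaro_matrix_def scalar_matrix_assoc[symmetric] scaleR_add_right)
qed

lemma cesaro_matrix_mult_left:
  "M ** cesaro_matrix M N = cesaro_matrix M N ** M"
  by (simp add: cesaro_matrix_def matrix_scalar_ac scalar_matrix_assoc[symmetric]
      matrix_mult_sum_left matrix_mult_sum_right matpow_commute scaleR_sum_right)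

lemma cesaro_matrix_defect_tendsto_0:
  fixes M :: "real^'n::finite^'n"
  assumes "stochastic_matrix M"
  shows "(\<lambda>N. (1 / real N) *\<^sub>R (matpow M N - mat 1)) \<longlonglongrightarrow> 0"
proof (rule Lim_null_comparison)
  have "norm (matpow M N - mat 1) \<le> 2 * CARD('n)" for N
    using norm_triangle_ineq4[of "matpow M N" "mat 1"]
      norm_stochastic_matrix_le[OF stochastic_matrix_matpow[OF assms, of N]]
      norm_stochastic_matrix_le[OF stochastic_matrix_mat_1, where 'n='n] by simp
  then show "\<forall>\<^sub>F N in sequentially.
      norm ((1 / real N) *\<^sub>R (matpow M N - mat 1)) \<le> 2 * CARD('n) / real N"
    by (intro always_eventually allI) (simp add: divide_right_mono)
  show "(\<lambda>N. 2 * CARD('n) / real N) \<longlonglongrightarrow> 0"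
    using filterlim_at_top_imp_at_infinity[OF filterlim_real_sequentially]
    by (rule tendsto_divide_0[OF tendsto_const])
qed

lemma tendsto_matrix_mult:
  fixes X Y :: "'a \<Rightarrow> real^'n::finite^'n"
  assumes "(X \<longlongrightarrow> A) F" "(Y \<longlongrightarrow> B) F"
  shows "((\<lambda>k. X k ** Y k) \<longlongrightarrow> A ** B) F"
  unfolding matrix_matrix_mult_def
  by (intro vec_tendstoI) (simp, intro tendsto_intros tendsto_vec_nth assms)

lemma matpow_absorb_right: "Q ** M = Q \<Longrightarrow> Q ** matpow M n = Q"
  by (induction n) (simp_all add: matrix_mul_assoc)

lemma matpow_absorb_left: "M ** Q = Q \<Longrightarrow> matpow M n ** Q = Q"
  by (induction n) (simp_all add: matpow_commute[symmetric] flip: matrix_mul_assoc)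

lemma cesaro_matrix_absorb_right: "Q ** M = Q \<Longrightarrow> N > 0 \<Longrightarrow> Q ** cesaro_matrix M N = Q"
  by (simp add: cesaro_matrix_def matrix_scalar_ac scalar_matrix_assoc[symmetric]
      matrix_mult_sum_right matpow_absorb_right
      sum_constant_scaleR del: sum_constant)

lemma cesaro_matrix_absorb_left: "M ** Q = Q \<Longrightarrow> N > 0 \<Longrightarrow> cesaro_matrix M N ** Q = Q"
  by (simp add: cesaro_matrix_def scalar_matrix_assoc[symmetric] matrix_mult_sum_left
      matpow_absorb_left sum_constant_scaleR del: sum_constant)

lemma cesaro_matrix_limit_point_invariant:
  assumes M: "stochastic_matrix M" and r: "strict_mono r"
    and Q: "(\<lambda>k. cesaro_matrix M (r k)) \<longlonglongrightarrow> Q"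
  shows "Q ** M = Q" "M ** Q = Q"
proof -
  have defect: "(\<lambda>k. (1 / real (r k)) *\<^sub>R (matpow M (r k) - mat 1)) \<longlonglongrightarrow> 0"
    using LIMSEQ_subseq_LIMSEQ[OF cesaro_matrix_defect_tendsto_0[OF M] r] by (simp add: o_def)
  have right: "(\<lambda>k. cesaro_matrix M (r k) ** M) \<longlonglongrightarrow> Q + 0"
    unfolding cesaro_matrix_mult_right by (rule tendsto_add[OF Q defect])
  show QM: "Q ** M = Q"
    using LIMSEQ_unique[OF tendsto_matrix_mult[OF Q tendsto_const] right] by simp
  have "(\<lambda>k. M ** cesaro_matrix M (r k)) \<longlonglongrightarrow> Q + 0"
    unfolding cesaro_matrix_mult_left by (rule right)
  then show "M ** Q = Q"
    using LIMSEQ_unique[OF tendsto_matrix_mult[OF tendsto_const Q]] by simp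
qed

lemma bounded_unique_limit_point_imp_LIMSEQ:
  fixes X :: "nat \<Rightarrow> 'a::heine_borel"
  assumes bounded: "bounded (range X)"
    and unique: "\<And>r Q. strict_mono r \<Longrightarrow> (X \<circ> r) \<longlonglongrightarrow> Q \<Longrightarrow> Q = L"
  shows "X \<longlonglongrightarrow> L"
proof (rule ccontr)
  assume "\<not> X \<longlonglongrightarrow> L"
  then obtain e where e: "e > 0" "\<not> (\<forall>\<^sub>F n in sequentially. dist (X n) L < e)"
    unfolding tendsto_iff by blast
  then have "\<exists>\<^sub>F n in sequentially. \<not> dist (X n) L < e" by (simp add: not_eventually)
  then have "infinite {n. \<not> dist (X n) L < e}"
    by (simp add: frequently_cofinite[symmetric] cofinite_eq_sequentially)
  then obtain r :: "nat \<Rightarrow> nat" where r: "strict_mono r" "\<And>n. r n \<in> {n. \<not> dist (X n) L < e}"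
    using infinite_enumerate by blast
  have "bounded (range (X \<circ> r))"
    using bounded by (rule bounded_subset) auto
  then obtain Q r' where r': "strict_mono r'" "((X \<circ> r) \<circ> r') \<longlonglongrightarrow> Q"
    using bounded_imp_convergent_subsequence by blast
  have "strict_mono (r \<circ> r')"
    using r(1) r'(1) by (simp add: strict_mono_def)
  moreover have "(X \<circ> (r \<circ> r')) \<longlonglongrightarrow> Q"
    using r'(2) by (simp add: o_assoc)
  ultimately have "Q = L"
    by (rule unique)
  with r'(2) have "\<forall>\<^sub>F n in sequentially. dist (((X \<circ> r) \<circ> r') n) L < e"
    using e(1) tendstoD by blast
  then obtain n where "dist (X (r (r' n))) L < e"
    by (auto simp: eventually_sequentially)
  with r(2)[of "r' n"] show False
    by simp
qed

lemma stochastic_matrix_limit: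
  assumes "\<forall>\<^sub>F N in sequentially. stochastic_matrix (X N)" "X \<longlonglongrightarrow> Q"
  shows "stochastic_matrix (Q :: real^'n::finite^'n)"
  unfolding stochastic_matrix_def
proof safe
  fix i j
  show "0 \<le> Q $ i $ j"
  proof (rule tendsto_lowerbound)
    show "(\<lambda>N. X N $ i $ j) \<longlonglongrightarrow> Q $ i $ j"
      by (intro tendsto_vec_nth assms(2))
    show "\<forall>\<^sub>F N in sequentially. 0 \<le> X N $ i $ j"
      using assms(1) by eventually_elim (simp add: stochastic_matrix_def)
  qed simp
  have "(\<lambda>N. \<Sum>j\<in>UNIV. X N $ i $ j) \<longlonglongrightarrow> (\<Sum>j\<in>UNIV. Q $ i $ j)"
    by (intro tendsto_sum tendsto_vec_nth assms(2))
  moreover have "(\<lambda>N. \<Sum>j\<in>UNIV. X N $ i $ j) \<longlonglongrightarrow> 1"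
    by (rule tendsto_eventually)
      (use assms(1) in \<open>auto simp: stochastic_matrix_def elim: eventually_mono\<close>)
  ultimately show "(\<Sum>j\<in>UNIV. Q $ i $ j) = 1"
    by (rule LIMSEQ_unique)
qed

lemma cesaro_matrix_limit_point_unique:
  assumes M: "stochastic_matrix M"
    and r: "strict_mono r" "(\<lambda>k. cesaro_matrix M (r k)) \<longlonglongrightarrow> Q"
    and r': "strict_mono r'" "(\<lambda>k. cesaro_matrix M (r' k)) \<longlonglongrightarrow> Q'"
  shows "Q' = Q"
proof -
  note Q = cesaro_matrix_limit_point_invariant[OF M r]
  note Q' = cesaro_matrix_limit_point_invariant[OF M r']
  have pos: "\<forall>\<^sub>F k in sequentially. 0 < s k" if "strict_mono s" for s :: "nat \<Rightarrow> nat"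
    using eventually_ge_at_top[of 1]
  proof eventually_elim
    case (elim k)
    with seq_suble[OF that, of k] show ?case
      by linarith
  qed
  \<comment> \<open>both limit points absorb every Cesaro average, so \<open>Q' ** Q\<close> equals both \<open>Q\<close> and \<open>Q'\<close>\<close>
  have "\<forall>\<^sub>F k in sequentially. cesaro_matrix M (r' k) ** Q = Q"
    using pos[OF r'(1)] by eventually_elim (simp add: cesaro_matrix_absorb_left Q)
  then have "Q' ** Q = Q"
    using LIMSEQ_unique[OF tendsto_matrix_mult[OF r'(2) tendsto_const] tendsto_eventually]
    by blast
  moreover have "\<forall>\<^sub>F k in sequentially. Q' ** cesaro_matrix M (r k) = Q'"
    using pos[OF r(1)] by eventually_elim (simp add: cesaro_matrix_absorb_right Q')
  then have "Q' ** Q = Q'"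
    using LIMSEQ_unique[OF tendsto_matrix_mult[OF tendsto_const r(2)] tendsto_eventually]
    by blast
  ultimately show ?thesis
    by simp
qed

lemma cesaro_matrix_converges:
  fixes M :: "real^'n::finite^'n"
  assumes M: "stochastic_matrix M"
  obtains Q where "cesaro_matrix M \<longlonglongrightarrow> Q" "Q ** M = Q" "stochastic_matrix Q"
proof -
  obtain Q r where r: "strict_mono r" "(cesaro_matrix M \<circ> r) \<longlonglongrightarrow> Q"
    using bounded_imp_convergent_subsequence[OF bounded_range_cesaro_matrix[OF M]] by blast
  have lim: "cesaro_matrix M \<longlonglongrightarrow> Q"
    using bounded_range_cesaro_matrix[OF M]
  proof (rule bounded_unique_limit_point_imp_LIMSEQ)
    show "Q' = Q" if "strict_mono r'" "(cesaro_matrix M \<circ> r') \<longlonglongrightarrow> Q'" for r' Q'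
      using cesaro_matrix_limit_point_unique[OF M r(1) _ that(1)] r(2) that(2)
      by (simp add: o_def)
  qed
  have "\<forall>\<^sub>F N in sequentially. stochastic_matrix (cesaro_matrix M N)"
    using M by (auto simp: eventually_sequentially intro!: exI[of _ 1] stochastic_matrix_cesaro_matrix)
  from this lim have "stochastic_matrix Q"
    by (rule stochastic_matrix_limit)
  with lim cesaro_matrix_limit_point_invariant[OF M r(1)] r(2) that show thesis
    by (simp add: o_def)
qed

section \<open>Memory-one play as a Markov chain\<close>

text \<open>Row \<open>w\<close> is the distribution of the next outcome after outcome \<open>w\<close> (both from X's side).\<close>

definition transition_matrix :: "(outcome \<Rightarrow> real) \<Rightarrow> (outcome \<Rightarrow> real) \<Rightarrow> real^outcome^outcome" where
  "transition_matrix p q =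
     (\<chi> w w'. prob_play (p w) (xcoop w') * prob_play (q (swap_outcome w)) (ycoop w'))"

definition initial_distribution :: "real \<Rightarrow> real \<Rightarrow> real^outcome" where
  "initial_distribution a b = (\<chi> w. prob_play a (xcoop w) * prob_play b (ycoop w))"

lemma sum_UNIV_outcome: "(\<Sum>w\<in>UNIV. f w) = f CC + f CD + f DC + (f DD :: 'a::comm_monoid_add)"
  by (simp add: UNIV_outcome ac_simps)

lemma stochastic_matrix_transition_matrix:
  assumes "memory_one p" "memory_one q"
  shows "stochastic_matrix (transition_matrix p q)"
  using assms unfolding stochastic_matrix_def transition_matrix_def memory_one_def
  by (auto simp: sum_UNIV_outcome prob_play_def algebra_simps intro!: mult_nonneg_nonneg)

lemma round_dist_0:
  "round_dist p a \<sigma> 0 w = prob_play a (xcoop w) * prob_play (\<sigma> []) (ycoop w)"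
  by (simp add: round_dist_def mem1_coop_def)

lemma round_dist_Suc:
  "round_dist p a (mem1_pattern q b) (Suc n) w' =
     (\<Sum>w\<in>UNIV. round_dist p a (mem1_pattern q b) n w * transition_matrix p q $ w $ w')"
proof -
  have histories: "{h::outcome list. length h = Suc n} = (\<lambda>(w, h). w # h) ` (UNIV \<times> {h. length h = n})"
    by (auto simp: length_Suc_conv image_iff)
  have inj: "inj_on (\<lambda>(w, h). w # h) (UNIV \<times> {h::outcome list. length h = n})"
    by (auto simp: inj_on_def)
  have "round_dist p a (mem1_pattern q b) (Suc n) w' =
     (\<Sum>w\<in>UNIV. \<Sum>h\<in>{h. length h = n}. hist_prob p a (mem1_pattern q b) (w' # w # h))"
    unfolding round_dist_def histories sum.reindex[OF inj]
    by (simp add: sum.cartesian_product split_def)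
  also have "\<dots> = (\<Sum>w\<in>UNIV. \<Sum>h\<in>{h. length h = n}.
      hist_prob p a (mem1_pattern q b) (w # h) * transition_matrix p q $ w $ w')"
    by (simp add: transition_matrix_def mem1_coop_def mem1_pattern_def mult.assoc)
  finally show ?thesis
    by (simp add: round_dist_def sum_distrib_right)
qed

lemma round_dist_eq_matpow:
  "round_dist p a (mem1_pattern q b) n w =
     (initial_distribution a b v* matpow (transition_matrix p q) n) $ w"
proof (induction n arbitrary: w)
  case 0
  then show ?case
    by (simp add: round_dist_0 initial_distribution_def mem1_pattern_def vector_matrix_mult_def
        mat_def if_distrib cong: if_cong)
next
  case (Suc n)
  then show ?case
    by (simp add: round_dist_Suc flip: vector_matrix_mul_assoc)
      (simp add: vector_matrix_mult_def mult.commute)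
qed

lemma cesaro_dist_eq_cesaro_matrix:
  "cesaro_dist p a (mem1_pattern q b) N w =
     (initial_distribution a b v* cesaro_matrix (transition_matrix p q) N) $ w"
  by (simp add: cesaro_dist_def cesaro_matrix_def round_dist_eq_matpow vector_matrix_mult_def
      sum_distrib_left sum_divide_distrib mult_ac)
    (rule sum.swap)

definition probability_vector :: "real^'n::finite \<Rightarrow> bool" where
  "probability_vector v \<longleftrightarrow> (\<forall>i. 0 \<le> v $ i) \<and> (\<Sum>i\<in>UNIV. v $ i) = 1"

lemma probability_vector_mult_stochastic_matrix:
  assumes "probability_vector v" "stochastic_matrix M"
  shows "probability_vector (v v* M)"
proof -
  have "(\<Sum>j\<in>UNIV. (v v* M) $ j) = (\<Sum>i\<in>UNIV. v $ i * (\<Sum>j\<in>UNIV. M $ i $ j))"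
    unfolding vector_matrix_mult_def by (simp add: sum_distrib_left) (rule sum.swap)
  with assms show ?thesis
    by (auto simp: probability_vector_def stochastic_matrix_def vector_matrix_mult_def
        intro!: sum_nonneg)
qed

lemma probability_vector_initial_distribution:
  assumes "0 \<le> a" "a \<le> 1" "0 \<le> b" "b \<le> 1"
  shows "probability_vector (initial_distribution a b)"
  using assms unfolding probability_vector_def initial_distribution_def
  by (auto simp: sum_UNIV_outcome prob_play_def algebra_simps intro!: mult_nonneg_nonneg)

lemma cesaro_dist_converges:
  assumes "memory_one p" "memory_one q" "0 \<le> a" "a \<le> 1" "0 \<le> b" "b \<le> 1"
  obtains v where "\<And>w. (\<lambda>N. cesaro_dist p a (mem1_pattern q b) N w) \<longlonglongrightarrow> v w"
    and "\<And>w. 0 \<le> v w" and "(\<Sum>w\<in>UNIV. v w) = 1"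
    and "\<And>w'. (\<Sum>w\<in>UNIV. v w * transition_matrix p q $ w $ w') = v w'"
proof -
  obtain Q where Q: "cesaro_matrix (transition_matrix p q) \<longlonglongrightarrow> Q"
      "Q ** transition_matrix p q = Q" "stochastic_matrix Q"
    using cesaro_matrix_converges[OF stochastic_matrix_transition_matrix[OF assms(1,2)]] .
  define u where "u = initial_distribution a b v* Q"
  have "probability_vector u"
    unfolding u_def using probability_vector_initial_distribution[OF assms(3-6)] Q(3)
    by (rule probability_vector_mult_stochastic_matrix)
  moreover have "(\<lambda>N. cesaro_dist p a (mem1_pattern q b) N w) \<longlonglongrightarrow> u $ w" for w
    unfolding cesaro_dist_eq_cesaro_matrix u_def vector_matrix_mult_def
    by simp (intro tendsto_intros tendsto_vec_nth Q(1))
  moreover have "u v* transition_matrix p q = u"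
    unfolding u_def vector_matrix_mul_assoc Q(2) ..
  ultimately show thesis
    by (intro that[of "\<lambda>w. u $ w"]) (auto simp: probability_vector_def vec_eq_iff vector_matrix_mult_def)
qed

lemma swap_outcome_swap_outcome [simp]: "swap_outcome (swap_outcome w) = w"
  by (cases w) auto

lemma xcoop_swap_outcome [simp]: "xcoop (swap_outcome w) = ycoop w"
  and ycoop_swap_outcome [simp]: "ycoop (swap_outcome w) = xcoop w"
  by (cases w; simp)+

lemma hist_prob_swap:
  "hist_prob p a (mem1_pattern q b) h = hist_prob q b (mem1_pattern p a) (map swap_outcome h)"
proof (induction h)
  case (Cons w h)
  have "mem1_coop p a h = mem1_pattern p a (map swap_outcome h)"
    "mem1_pattern q b h = mem1_coop q b (map swap_outcome h)"
    by (cases h; simp add: mem1_coop_def mem1_pattern_def)+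
  with Cons show ?case
    by (simp add: mult_ac)
qed simp

lemma cesaro_dist_swap:
  "cesaro_dist p a (mem1_pattern q b) N w = cesaro_dist q b (mem1_pattern p a) N (swap_outcome w)"
proof -
  have "round_dist p a (mem1_pattern q b) n w = round_dist q b (mem1_pattern p a) n (swap_outcome w)"
    for n
    unfolding round_dist_def
  proof (rule sum.reindex_bij_witness[where i="map swap_outcome" and j="map swap_outcome"])
    show "hist_prob q b (mem1_pattern p a) (swap_outcome w # map swap_outcome h) =
        hist_prob p a (mem1_pattern q b) (w # h)" for h
      using hist_prob_swap[of p a q b "w # h"] by simp
  qed (simp_all add: comp_def)
  then show ?thesis
    by (simp add: cesaro_dist_def)
qed

lemma sX_eq: "sX T R P S v = v CC * R + v CD * S + v DC * T + v DD * P"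
  by (simp add: sX_def sum_UNIV_outcome)

lemma sY_eq: "sY T R P S v = v CC * R + v CD * T + v DC * S + v DD * P"
  by (simp add: sY_def sum_UNIV_outcome)

lemma game_matrix_eq_sX:
  assumes "\<And>w. (\<lambda>N. cesaro_dist (p i) (x0 i) (mem1_pattern (p j) (x0 j)) N w) \<longlonglongrightarrow> v w"
  shows "game_matrix T R P S p x0 i j = sX T R P S v"
  unfolding game_matrix_def sX_def
  by (rule limI) (intro tendsto_intros assms)

lemma strategy_pattern_mem1_pattern:
  assumes "memory_one q" "0 \<le> b" "b \<le> 1"
  shows "strategy_pattern (mem1_pattern q b)"
  using assms
  by (auto simp: strategy_pattern_def mem1_pattern_def memory_one_def split: list.split)

lemma round_dist_agreeable_self:
  assumes "agreeable p"
  shows "round_dist p 1 (mem1_pattern p 1) n w = (if w = CC then 1 else 0)"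
proof (induction n arbitrary: w)
  case 0
  then show ?case
    by (cases w) (simp_all add: round_dist_0 mem1_pattern_def prob_play_def)
next
  case (Suc n)
  with assms show ?case
    by (cases w)
      (simp_all add: round_dist_Suc sum_UNIV_outcome transition_matrix_def prob_play_def agreeable_def)
qed

lemma game_matrix_agreeable_self:
  assumes "agreeable (p i)" "x0 i = 1"
  shows "game_matrix T R P S p x0 i i = R"
proof -
  have "(\<lambda>N. cesaro_dist (p i) (x0 i) (mem1_pattern (p i) (x0 i)) N w)
          \<longlonglongrightarrow> (if w = CC then 1 else 0)" for w
  proof (rule tendsto_eventually)
    show "\<forall>\<^sub>F N in sequentially.
        cesaro_dist (p i) (x0 i) (mem1_pattern (p i) (x0 i)) N w = (if w = CC then 1 else 0)"
      using eventually_gt_at_top[of 0]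
      by eventually_elim (simp add: cesaro_dist_def assms round_dist_agreeable_self)
  qed
  then have "game_matrix T R P S p x0 i i = sX T R P S (\<lambda>w. if w = CC then 1 else 0)"
    by (rule game_matrix_eq_sX)
  then show ?thesis
    by (simp add: sX_eq)
qed

section \<open>Good strategies are evolutionarily stable\<close>

lemma limit_dist_if_tendsto:
  assumes "\<And>w. (\<lambda>N. cesaro_dist p x0 \<sigma> N w) \<longlonglongrightarrow> v w"
  shows "limit_dist p x0 \<sigma> v"
  unfolding limit_dist_def using assms strict_mono_id by (intro exI[of _ id]) simp

lemma limit_dist_swap:
  assumes "\<And>w. (\<lambda>N. cesaro_dist p a (mem1_pattern q b) N w) \<longlonglongrightarrow> v w"
  shows "limit_dist q b (mem1_pattern p a) (v \<circ> swap_outcome)"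
  using assms[of "swap_outcome _"]
  by (intro limit_dist_if_tendsto) (simp add: cesaro_dist_swap[of p a q b])

lemma sX_comp_swap_outcome [simp]: "sX T R P S (v \<circ> swap_outcome) = sY T R P S v"
  by (simp add: sX_eq sY_eq)

lemma sY_comp_swap_outcome [simp]: "sY T R P S (v \<circ> swap_outcome) = sX T R P S v"
  by (simp add: sX_eq sY_eq)

lemma good_payoffs:
  assumes "good T R P S p" "x0 \<in> {0..1}" "strategy_pattern \<sigma>" "limit_dist p x0 \<sigma> v"
    and "sY T R P S v \<ge> R"
  shows "sY T R P S v = R" "sX T R P S v = R"
  using assms unfolding good_def by blast+

lemma mutual_cooperation_if_payoff_sum_ge:
  assumes "PD_payoffs T R P S" "\<And>w. 0 \<le> v w" "(\<Sum>w\<in>UNIV. v w) = 1"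
    and "sX T R P S v + sY T R P S v \<ge> 2 * R"
  shows "v CC = 1" "v CD = 0" "v DC = 0" "v DD = 0"
proof -
  have payoffs: "T > R" "R > P" "P > S" "2 * R > T + S"
    using assms(1) by (auto simp: PD_payoffs_def)
  have total: "v CC = 1 - v CD - v DC - v DD"
    using assms(3) by (simp add: sum_UNIV_outcome)
  \<comment> \<open>the shortfall from \<open>2R\<close> is a positive combination of the non-cooperative weights\<close>
  have "(2 * R - T - S) * (v CD + v DC) + (2 * R - 2 * P) * v DD
      = 2 * R - (sX T R P S v + sY T R P S v)"
    unfolding sX_eq sY_eq total by (simp add: algebra_simps)
  moreover have "(2 * R - T - S) * (v CD + v DC) \<ge> 0" "(2 * R - 2 * P) * v DD \<ge> 0"
    using payoffs assms(2) by simp_all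
  ultimately have "(2 * R - T - S) * (v CD + v DC) = 0" "(2 * R - 2 * P) * v DD = 0"
    using assms(4) by linarith+
  with payoffs have "v CD + v DC = 0" "v DD = 0"
    by simp_all
  with assms(2)[of CD] assms(2)[of DC] total show
    "v CC = 1" "v CD = 0" "v DC = 0" "v DD = 0"
    by linarith+
qed

lemma agreeable_if_stationary_mutual_cooperation:
  assumes "memory_one p" "memory_one q"
    and stationary: "(\<Sum>w\<in>UNIV. v w * transition_matrix p q $ w $ CC) = v CC"
    and "v CC = 1" "v CD = 0" "v DC = 0" "v DD = 0"
  shows "agreeable p" "agreeable q"
proof -
  have product: "p CC * q CC = 1"
    using stationary assms(4-7) by (simp add: sum_UNIV_outcome transition_matrix_def prob_play_def)
  have bounds: "0 \<le> p CC" "p CC \<le> 1" "0 \<le> q CC" "q CC \<le> 1"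
    using assms(1,2) by (auto simp: memory_one_def)
  have "p CC * q CC \<le> p CC" "p CC * q CC \<le> q CC"
    using bounds by (simp_all add: mult_right_le_one_le mult_left_le_one_le)
  with product bounds show "agreeable p" "agreeable q"
    unfolding agreeable_def by linarith+
qed

theorem ESS_if_good:
  fixes p :: "'i::finite \<Rightarrow> outcome \<Rightarrow> real"
  assumes PD: "PD_payoffs T R P S"
    and memory_one: "\<And>i. memory_one (p i)"
    and initial: "\<And>i. 0 \<le> x0 i \<and> x0 i \<le> 1"
    and good: "good T R P S (p istar)"
    and cooperates_first: "x0 istar = 1"
    and others: "\<And>j. j \<noteq> istar \<Longrightarrow> \<not> agreeable (p j)"
  shows "ESS (game_matrix T R P S p x0) istar"
  unfolding ESS_def
proof (intro allI impI)
  fix j assume "j \<noteq> istar"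
  obtain v where
    lim: "\<And>w. (\<lambda>N. cesaro_dist (p j) (x0 j) (mem1_pattern (p istar) (x0 istar)) N w) \<longlonglongrightarrow> v w"
    and distribution: "\<And>w. 0 \<le> v w" "(\<Sum>w\<in>UNIV. v w) = 1"
    and stationary: "\<And>w'. (\<Sum>w\<in>UNIV. v w * transition_matrix (p j) (p istar) $ w $ w') = v w'"
    using initial by (blast intro: cesaro_dist_converges[OF memory_one memory_one])
  have "game_matrix T R P S p x0 istar istar = R"
    using good cooperates_first by (intro game_matrix_agreeable_self) (simp_all add: good_def)
  moreover have "game_matrix T R P S p x0 j istar = sX T R P S v"
    using lim by (rule game_matrix_eq_sX)
  moreover have "sX T R P S v \<ge> R \<Longrightarrow> agreeable (p j)"
  proof -
    assume "sX T R P S v \<ge> R"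
    \<comment> \<open>\<open>v\<close> seen from \<open>istar\<close>'s side is a limit distribution in which the rival earns \<open>sX v\<close>\<close>
    have swapped: "limit_dist (p istar) 1 (mem1_pattern (p j) (x0 j)) (v \<circ> swap_outcome)"
      using limit_dist_swap[OF lim] cooperates_first by simp
    have "strategy_pattern (mem1_pattern (p j) (x0 j))"
      using memory_one initial by (simp add: strategy_pattern_mem1_pattern)
    from good_payoffs[OF good _ this swapped] \<open>sX T R P S v \<ge> R\<close>
    have "sX T R P S v = R" "sY T R P S v = R"
      by simp_all
    then have "v CC = 1" "v CD = 0" "v DC = 0" "v DD = 0"
      using mutual_cooperation_if_payoff_sum_ge[OF PD distribution] by simp_all
    then show "agreeable (p j)"
      by (rule agreeable_if_stationary_mutual_cooperation(1)[OF memory_one memory_one stationary])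
  qed
  ultimately show "game_matrix T R P S p x0 j istar < game_matrix T R P S p x0 istar istar"
    using others[OF \<open>j \<noteq> istar\<close>] by fastforce
qed

section \<open>Replicator dynamics near an ESS\<close>

lemma scalar_linear_ode_solution:
  fixes f h :: "real \<Rightarrow> real"
  assumes h: "continuous_on {0..} h"
    and f: "\<And>t. t \<ge> 0 \<Longrightarrow> (f has_real_derivative h t * f t) (at t within {0..})"
    and "t \<ge> 0"
  shows "f t = f 0 * exp (integral {0..t} h)"
proof -
  define H where "H s = integral {0..s} h" for s
  have h': "continuous_on {0..t} h"
    using h by (rule continuous_on_subset) auto
  have H: "(H has_real_derivative h s) (at s within {0..t})" if "s \<in> {0..t}" for s
    unfolding H_def has_real_derivative_iff_has_vector_derivative
    by (rule integral_has_vector_derivative[OF h' that])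
  have f': "(f has_real_derivative h s * f s) (at s within {0..t})" if "s \<in> {0..t}" for s
    using f[of s] that by (auto intro: has_field_derivative_subset)
  have "((\<lambda>s. f s * exp (- H s)) has_real_derivative 0) (at s within {0..t})"
    if s: "s \<in> {0..t}" for s
  proof -
    have "((\<lambda>s. exp (- H s)) has_real_derivative exp (- H s) * - h s) (at s within {0..t})"
      by (rule DERIV_chain2[OF DERIV_exp DERIV_minus[OF H[OF s]]])
    from DERIV_mult[OF f'[OF s] this] show ?thesis
      by (rule DERIV_cong) (simp add: algebra_simps)
  qed
  then obtain c where "\<forall>s\<in>{0..t}. f s * exp (- H s) = c"
    using has_field_derivative_zero_constant[of "{0..t}" "\<lambda>s. f s * exp (- H s)"] by auto
  then have "f t * exp (- H t) = f 0"
    using \<open>t \<ge> 0\<close> by (force simp: H_def)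
  then show ?thesis
    by (simp add: H_def exp_minus field_simps)
qed

lemma replicator_solution_continuous:
  assumes "replicator_solution A x"
  shows "continuous_on {0..} x"
  unfolding continuous_on_eq_continuous_within
proof
  fix t :: real assume "t \<in> {0..}"
  with assms have "(x has_vector_derivative replicator A (x t)) (at t within {0..})"
    by (simp add: replicator_solution_def)
  then show "continuous (at t within {0..}) x"
    by (rule has_vector_derivative_continuous)
qed

lemma replicator_solution_component:
  assumes "replicator_solution A x" "t \<ge> 0"
  shows "((\<lambda>t. x t $ i) has_real_derivative replicator A (x t) $ i) (at t within {0..})"
  unfolding has_real_derivative_iff_has_vector_derivative
  using bounded_linear.has_vector_derivative[OF bounded_linear_vec_nth, of x
      "replicator A (x t)" "at t within {0..}" i] assms
  by (simp add: replicator_solution_def)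

lemma continuous_on_A_vec: "continuous_on S x \<Longrightarrow> continuous_on S (\<lambda>t. A_vec A i (x t))"
  unfolding A_vec_def by (intro continuous_intros continuous_on_component)

lemma continuous_on_A_avg: "continuous_on S x \<Longrightarrow> continuous_on S (\<lambda>t. A_avg A (x t))"
  unfolding A_avg_def by (intro continuous_intros continuous_on_component continuous_on_A_vec)

lemma sum_replicator:
  "(\<Sum>i\<in>UNIV. replicator A \<pi> $ i) = - A_avg A \<pi> * ((\<Sum>i\<in>UNIV. \<pi> $ i) - 1)"
proof -
  have "(\<Sum>i\<in>UNIV. replicator A \<pi> $ i)
      = (\<Sum>i\<in>UNIV. \<pi> $ i * A_vec A i \<pi>) - (\<Sum>i\<in>UNIV. \<pi> $ i) * A_avg A \<pi>"
    by (simp add: replicator_def right_diff_distrib sum_subtractf sum_distrib_right)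
  then show ?thesis
    by (simp add: A_avg_def algebra_simps)
qed

lemma replicator_solution_in_rep_simplex:
  assumes sol: "replicator_solution A x" and x0: "x 0 \<in> rep_simplex" and "t \<ge> 0"
  shows "x t \<in> rep_simplex"
proof -
  have x: "continuous_on {0..} x"
    using sol by (rule replicator_solution_continuous)
  \<comment> \<open>each component, and the total mass minus one, solves a scalar linear equation\<close>
  have "x t $ i = x 0 $ i * exp (integral {0..t} (\<lambda>t. A_vec A i (x t) - A_avg A (x t)))" for i
  proof (rule scalar_linear_ode_solution[OF _ _ \<open>t \<ge> 0\<close>])
    show "continuous_on {0..} (\<lambda>t. A_vec A i (x t) - A_avg A (x t))"
      by (intro continuous_intros continuous_on_A_vec continuous_on_A_avg x)
    show "((\<lambda>t. x t $ i) has_real_derivative (A_vec A i (x s) - A_avg A (x s)) * x s $ i)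
        (at s within {0..})" if "s \<ge> 0" for s
      using replicator_solution_component[OF sol that, of i]
      by (simp add: replicator_def mult.commute)
  qed
  moreover have "(\<Sum>i\<in>UNIV. x t $ i) - 1
      = ((\<Sum>i\<in>UNIV. x 0 $ i) - 1) * exp (integral {0..t} (\<lambda>t. - A_avg A (x t)))"
  proof (rule scalar_linear_ode_solution[OF _ _ \<open>t \<ge> 0\<close>])
    show "continuous_on {0..} (\<lambda>t. - A_avg A (x t))"
      by (intro continuous_intros continuous_on_A_avg x)
    fix s :: real assume "s \<ge> 0"
    have "((\<lambda>t. (\<Sum>i\<in>UNIV. x t $ i) - 1) has_real_derivative
        (\<Sum>i\<in>UNIV. replicator A (x s) $ i)) (at s within {0..})"
      using replicator_solution_component[OF sol \<open>s \<ge> 0\<close>]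
      by (intro derivative_eq_intros) auto
    then show "((\<lambda>t. (\<Sum>i\<in>UNIV. x t $ i) - 1) has_real_derivative
        - A_avg A (x s) * ((\<Sum>i\<in>UNIV. x s $ i) - 1)) (at s within {0..})"
      by (simp add: sum_replicator)
  qed
  ultimately show ?thesis
    using x0 by (simp add: rep_simplex_def)
qed

lemma rep_simplex_component_bounds:
  assumes "\<pi> \<in> rep_simplex"
  shows "0 \<le> \<pi> $ i" "\<pi> $ i \<le> 1"
proof -
  show nonneg: "0 \<le> \<pi> $ i" for i
    using assms by (simp add: rep_simplex_def)
  have "\<pi> $ i \<le> (\<Sum>l\<in>UNIV. \<pi> $ l)"
    by (rule member_le_sum) (simp_all add: nonneg)
  with assms show "\<pi> $ i \<le> 1"
    by (simp add: rep_simplex_def)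
qed

lemma vertex_in_rep_simplex: "vertex i \<in> rep_simplex"
  by (simp add: vertex_def rep_simplex_def)

lemma dist_vertex_le:
  assumes "\<pi> \<in> rep_simplex"
  shows "dist \<pi> (vertex i) \<le> 2 * (1 - \<pi> $ i)"
proof -
  note bounds = rep_simplex_component_bounds[OF assms]
  have "dist \<pi> (vertex i) \<le> (\<Sum>l\<in>UNIV. \<bar>(\<pi> - vertex i) $ l\<bar>)"
    unfolding dist_norm by (rule norm_le_l1_cart)
  also have "\<dots> = (\<Sum>l\<in>UNIV. \<pi> $ l + (if l = i then 1 - 2 * \<pi> $ l else 0))"
    by (rule sum.cong) (auto simp: vertex_def bounds)
  also have "\<dots> = 2 * (1 - \<pi> $ i)"
    using assms by (simp add: sum.distrib rep_simplex_def)
  finally show ?thesis .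
qed

lemma dist_vertex_ge:
  assumes "\<pi> \<in> rep_simplex"
  shows "1 - \<pi> $ i \<le> dist \<pi> (vertex i)"
proof -
  have "1 - \<pi> $ i = \<bar>(\<pi> - vertex i) $ i\<bar>"
    using rep_simplex_component_bounds[OF assms] by (simp add: vertex_def)
  also have "\<dots> \<le> dist \<pi> (vertex i)"
    unfolding dist_norm by (rule component_le_norm_cart)
  finally show ?thesis .
qed

lemma replicator_vertex: "replicator A (vertex i) = 0"
proof -
  have select: "(\<Sum>j\<in>UNIV. (if j = i then 1 else 0) * f j) = (f i :: real)" for f
    by (simp add: if_distrib[of "\<lambda>c. c * f _"] cong: if_cong)
  have "A_vec A i (vertex i) = A i i" "A_avg A (vertex i) = A i i"
    by (simp_all add: A_vec_def A_avg_def vertex_def select)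
  then show ?thesis
    by (simp add: replicator_def vec_eq_iff vertex_def)
qed

lemma sum_rep_simplex_off_vertex:
  assumes "\<pi> \<in> rep_simplex"
  shows "(\<Sum>l\<in>UNIV. \<pi> $ l * (if l = i then 0 else a)) = a * (1 - \<pi> $ i)"
proof -
  have "(\<Sum>l\<in>UNIV. \<pi> $ l * (if l = i then 0 else a))
      = (\<Sum>l\<in>UNIV. a * \<pi> $ l - (if l = i then a * \<pi> $ l else 0))"
    by (rule sum.cong) auto
  with assms show ?thesis
    by (simp add: sum_subtractf rep_simplex_def flip: sum_distrib_left) (simp add: algebra_simps)
qed

lemma A_vec_near_vertex:
  assumes "\<pi> \<in> rep_simplex" and K: "\<And>k l. \<bar>A k l\<bar> \<le> K"
  shows "\<bar>A_vec A k \<pi> - A k i\<bar> \<le> 2 * K * (1 - \<pi> $ i)"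
proof -
  have "A_vec A k \<pi> - A k i = (\<Sum>l\<in>UNIV. \<pi> $ l * (A k l - A k i))"
    using assms(1)
    by (simp add: A_vec_def rep_simplex_def right_diff_distrib sum_subtractf
        flip: sum_distrib_right)
  also have "\<bar>\<dots>\<bar> \<le> (\<Sum>l\<in>UNIV. \<bar>\<pi> $ l * (A k l - A k i)\<bar>)"
    by (rule sum_abs)
  also have "\<dots> \<le> (\<Sum>l\<in>UNIV. \<pi> $ l * (if l = i then 0 else 2 * K))"
  proof (rule sum_mono)
    fix l
    have "\<bar>A k l - A k i\<bar> \<le> 2 * K"
      using K[of k l] K[of k i] by linarith
    then show "\<bar>\<pi> $ l * (A k l - A k i)\<bar> \<le> \<pi> $ l * (if l = i then 0 else 2 * K)"
      using rep_simplex_component_bounds(1)[OF assms(1), of l]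
      by (auto simp: abs_mult intro: mult_left_mono)
  qed
  also have "\<dots> = 2 * K * (1 - \<pi> $ i)"
    by (rule sum_rep_simplex_off_vertex[OF assms(1)])
  finally show ?thesis .
qed

lemma ESS_gap:
  fixes A :: "'i::finite \<Rightarrow> 'i \<Rightarrow> real"
  assumes "ESS A i"
  obtains g where "g > 0" "\<And>j. j \<noteq> i \<Longrightarrow> g \<le> A i i - A j i"
proof
  define G where "G = insert 1 ((\<lambda>j. A i i - A j i) ` (UNIV - {i}))"
  show "Min G > 0"
    unfolding G_def using assms by (subst Min_gr_iff) (auto simp: ESS_def)
  show "Min G \<le> A i i - A j i" if "j \<noteq> i" for j
    using that by (auto simp: G_def intro: Min_le)
qed

lemma ESS_fitness_advantage:
  fixes A :: "'i::finite \<Rightarrow> 'i \<Rightarrow> real"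
  assumes "ESS A i"
  obtains c \<delta> where "c > 0" "\<delta> > 0"
    "\<And>\<pi>. \<pi> \<in> rep_simplex \<Longrightarrow> 1 - \<pi> $ i \<le> \<delta> \<Longrightarrow>
       c * (1 - \<pi> $ i) \<le> A_vec A i \<pi> - A_avg A \<pi>"
proof -
  obtain g where g: "g > 0" "\<And>j. j \<noteq> i \<Longrightarrow> g \<le> A i i - A j i"
    using ESS_gap[OF assms] by blast
  define K where "K = (\<Sum>k\<in>UNIV. \<Sum>l\<in>UNIV. \<bar>A k l\<bar>)"
  have K: "\<bar>A k l\<bar> \<le> K" for k l
    unfolding K_def
    using member_le_sum[of k UNIV "\<lambda>k. \<Sum>l\<in>UNIV. \<bar>A k l\<bar>"]
      member_le_sum[of l UNIV "\<lambda>l. \<bar>A k l\<bar>"] by (simp add: sum_nonneg)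
  then have "K \<ge> 0"
    using abs_ge_zero order_trans by blast
  \<comment> \<open>near the vertex every payoff is within \<open>2K(1 - \<pi> i)\<close> of its value at the vertex, so the
     gap \<open>g\<close> to each rival survives halved\<close>
  have "g / 2 * (1 - \<pi> $ i) \<le> A_vec A i \<pi> - A_avg A \<pi>"
    if \<pi>: "\<pi> \<in> rep_simplex" and small: "1 - \<pi> $ i \<le> g / (8 * K + 8)" for \<pi>
  proof -
    have "4 * K * (1 - \<pi> $ i) \<le> g / 2"
      using small \<open>K \<ge> 0\<close> rep_simplex_component_bounds[OF \<pi>, of i]
      by (simp add: field_simps)
    then have rivals: "g / 2 \<le> A_vec A i \<pi> - A_vec A k \<pi>" if "k \<noteq> i" for k
      using g(2)[OF that] A_vec_near_vertex[OF \<pi>, of A K i i, OF K]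
        A_vec_near_vertex[OF \<pi>, of A K k i, OF K]
      by (simp add: abs_le_iff)
    have "g / 2 * (1 - \<pi> $ i) = (\<Sum>k\<in>UNIV. \<pi> $ k * (if k = i then 0 else g / 2))"
      by (rule sum_rep_simplex_off_vertex[OF \<pi>, symmetric])
    also have "\<dots> \<le> (\<Sum>k\<in>UNIV. \<pi> $ k * (A_vec A i \<pi> - A_vec A k \<pi>))"
      using rivals rep_simplex_component_bounds(1)[OF \<pi>]
      by (intro sum_mono) (simp add: mult_left_mono)
    also have "\<dots> = A_vec A i \<pi> - A_avg A \<pi>"
      using \<pi> by (simp add: A_avg_def rep_simplex_def right_diff_distrib sum_subtractf
          flip: sum_distrib_right)
    finally show ?thesis .
  qed
  moreover have "g / 2 > 0" "g / (8 * K + 8) > 0"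
    using g(1) \<open>K \<ge> 0\<close> by simp_all
  ultimately show thesis
    using that by blast
qed

lemma continuous_stays_below:
  fixes u :: "real \<Rightarrow> real"
  assumes u: "continuous_on {0..} u" and "u 0 < b"
    and barrier: "\<And>T. T \<ge> 0 \<Longrightarrow> (\<And>s. 0 < s \<Longrightarrow> s < T \<Longrightarrow> u s \<le> b) \<Longrightarrow> u T < b"
    and "t \<ge> 0"
  shows "u t < b"
proof (rule ccontr)
  assume "\<not> u t < b"
  define Z where "Z = {0..t} \<inter> u -` {b..}"
  have "Z \<noteq> {}" "bdd_below Z"
    using \<open>t \<ge> 0\<close> \<open>\<not> u t < b\<close> by (auto simp: Z_def bdd_below_def)
  moreover have "closed Z"
    unfolding Z_def by (rule continuous_closed_preimage) (auto intro: continuous_on_subset[OF u])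
  ultimately have first: "Inf Z \<in> Z"
    by (rule closed_contains_Inf)
  \<comment> \<open>\<open>Inf Z\<close> is the first time \<open>u\<close> reaches \<open>b\<close>\<close>
  have "u s \<le> b" if "0 < s" "s < Inf Z" for s
  proof -
    have "s \<notin> Z"
      using cInf_lower[OF _ \<open>bdd_below Z\<close>, of s] that by force
    with that first show ?thesis
      by (auto simp: Z_def)
  qed
  with first have "u (Inf Z) < b"
    by (intro barrier) (auto simp: Z_def)
  with first show False
    by (auto simp: Z_def)
qed

lemma replicator_solution_vertex_gap_deriv:
  assumes "replicator_solution A x" "t > 0"
  shows "((\<lambda>t. 1 - x t $ i) has_real_derivative
      - (x t $ i * (A_vec A i (x t) - A_avg A (x t)))) (at t)"
proof -
  have "at t within {0..} = at t"
    using \<open>t > 0\<close> by (intro at_within_interior) (simp add: interior_real_atLeast)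
  with replicator_solution_component[OF assms(1), of t i] \<open>t > 0\<close>
  have "((\<lambda>t. x t $ i) has_real_derivative replicator A (x t) $ i) (at t)"
    by simp
  then show ?thesis
    by (auto intro!: derivative_eq_intros simp: replicator_def)
qed

context
  fixes A :: "'i::finite \<Rightarrow> 'i \<Rightarrow> real" and i :: 'i and c \<delta> :: real
  assumes advantage: "\<And>\<pi>. \<pi> \<in> rep_simplex \<Longrightarrow> 1 - \<pi> $ i \<le> \<delta> \<Longrightarrow>
      c * (1 - \<pi> $ i) \<le> A_vec A i \<pi> - A_avg A \<pi>"
    and c: "c \<ge> 0"
begin

lemma replicator_weighted_gap_antimono:
  assumes sol: "replicator_solution A x" and x0: "x 0 \<in> rep_simplex" and "T \<ge> 0"
    and near: "\<And>s. 0 < s \<Longrightarrow> s < T \<Longrightarrow> 1 - x s $ i \<le> min (1/2) \<delta>"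
  shows "(1 - x T $ i) * exp (c / 2 * T) \<le> 1 - x 0 $ i"
proof -
  have "(1 - x T $ i) * exp (c / 2 * T) \<le> (1 - x 0 $ i) * exp (c / 2 * 0)"
  proof (rule DERIV_nonpos_imp_decreasing_open[OF \<open>T \<ge> 0\<close>])
    fix s :: real assume s: "0 < s" "s < T"
    define u where "u = 1 - x s $ i"
    define D where "D = A_vec A i (x s) - A_avg A (x s)"
    have "x s \<in> rep_simplex"
      using replicator_solution_in_rep_simplex[OF sol x0] s by simp
    then have "c * u \<le> D" "0 \<le> u" "u \<le> 1/2"
      using advantage near[OF s] rep_simplex_component_bounds[of "x s" i]
      by (simp_all add: u_def D_def)
    moreover from this have "0 \<le> D"
      using c by (meson mult_nonneg_nonneg order_trans)
    \<comment> \<open>the share \<open>x s $ i \<ge> 1/2\<close> costs at most a factor two in the rate\<close>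
    ultimately have rate: "c / 2 * u \<le> x s $ i * D"
      using mult_right_mono[of "1/2" "x s $ i" D] by (simp add: u_def)
    have "((\<lambda>t. (1 - x t $ i) * exp (c / 2 * t)) has_real_derivative
        - (x s $ i * D) * exp (c / 2 * s) + exp (c / 2 * s) * (c / 2) * u) (at s)"
      unfolding u_def D_def
      by (rule DERIV_mult[OF replicator_solution_vertex_gap_deriv[OF sol s(1)]]
          DERIV_cong[OF DERIV_chain2[OF DERIV_exp DERIV_cmult[OF DERIV_ident]]])+ simp
    moreover have "- (x s $ i * D) * exp (c / 2 * s) + exp (c / 2 * s) * (c / 2) * u \<le> 0"
      using mult_right_mono[OF rate, of "exp (c / 2 * s)"] by (simp add: algebra_simps)
    ultimately show
      "\<exists>y. ((\<lambda>t. (1 - x t $ i) * exp (c / 2 * t)) has_real_derivative y) (at s) \<and> y \<le> 0"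
      by blast
  next
    have "continuous_on {0..T} x"
      using replicator_solution_continuous[OF sol] by (rule continuous_on_subset) auto
    then show "continuous_on {0..T} (\<lambda>t. (1 - x t $ i) * exp (c / 2 * t))"
      by (intro continuous_intros continuous_on_component)
  qed
  then show ?thesis
    by simp
qed

lemma replicator_vertex_gap_decay:
  assumes sol: "replicator_solution A x" and x0: "x 0 \<in> rep_simplex"
    and init: "1 - x 0 $ i < min (1/2) \<delta>" and "t \<ge> 0"
  shows "1 - x t $ i \<le> (1 - x 0 $ i) * exp (- (c / 2) * t)"
proof -
  have nonneg: "0 \<le> 1 - x s $ i" if "s \<ge> 0" for s
    using rep_simplex_component_bounds[OF replicator_solution_in_rep_simplex[OF sol x0 that]]
    by simp
  have near: "1 - x s $ i < min (1/2) \<delta>" if "s \<ge> 0" for s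
  proof (rule continuous_stays_below[where u="\<lambda>s. 1 - x s $ i", OF _ init _ that])
    show "continuous_on {0..} (\<lambda>s. 1 - x s $ i)"
      by (intro continuous_intros continuous_on_component replicator_solution_continuous[OF sol])
    fix T :: real assume "T \<ge> 0" "\<And>s. 0 < s \<Longrightarrow> s < T \<Longrightarrow> 1 - x s $ i \<le> min (1/2) \<delta>"
    from replicator_weighted_gap_antimono[OF sol x0 this]
    have "(1 - x T $ i) * exp (c / 2 * T) \<le> 1 - x 0 $ i" .
    moreover have "1 - x T $ i \<le> (1 - x T $ i) * exp (c / 2 * T)"
      using nonneg[OF \<open>T \<ge> 0\<close>] c \<open>T \<ge> 0\<close> by (simp add: mult_le_cancel_left1)
    ultimately show "1 - x T $ i < min (1/2) \<delta>"
      using init by linarith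
  qed
  have "(1 - x t $ i) * exp (c / 2 * t) \<le> 1 - x 0 $ i"
    using replicator_weighted_gap_antimono[OF sol x0 \<open>t \<ge> 0\<close>] near by (simp add: less_imp_le)
  then show ?thesis
    by (simp add: exp_minus field_simps)
qed

end

lemma replicator_attractor_if_exponential_bound:
  assumes "e \<in> rep_simplex" "replicator A e = 0" "k > 0" "\<delta> > 0" "C > 0"
    and bound: "\<And>x t. replicator_solution A x \<Longrightarrow> x 0 \<in> rep_simplex \<Longrightarrow> dist (x 0) e < \<delta> \<Longrightarrow>
      t \<ge> 0 \<Longrightarrow> dist (x t) e \<le> C * dist (x 0) e * exp (- k * t)"
  shows "replicator_attractor A e"
  unfolding replicator_attractor_def
proof (intro conjI allI impI)
  fix \<epsilon> :: real assume "\<epsilon> > 0"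
  show "\<exists>\<delta>'>0. \<forall>x. replicator_solution A x \<and> x 0 \<in> rep_simplex \<and> dist (x 0) e < \<delta>' \<longrightarrow>
      (\<forall>t\<ge>0. dist (x t) e < \<epsilon>)"
  proof (intro exI[of _ "min \<delta> (\<epsilon> / C)"] conjI allI impI)
    show "0 < min \<delta> (\<epsilon> / C)"
      using assms(4,5) \<open>\<epsilon> > 0\<close> by simp
    fix x and t :: real
    assume x: "replicator_solution A x \<and> x 0 \<in> rep_simplex \<and> dist (x 0) e < min \<delta> (\<epsilon> / C)"
      and "t \<ge> 0"
    then have "dist (x t) e \<le> C * dist (x 0) e * exp (- k * t)"
      by (intro bound) auto
    also have "\<dots> \<le> C * dist (x 0) e"
      using assms(3,5) \<open>t \<ge> 0\<close> by (simp add: mult_left_le)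
    also have "\<dots> < \<epsilon>"
      using x assms(5) by (simp add: field_simps)
    finally show "dist (x t) e < \<epsilon>" .
  qed
next
  have "((\<lambda>t. exp (- k * t)) \<longlongrightarrow> 0) at_top"
    using \<open>k > 0\<close>
    by (intro filterlim_compose[OF exp_at_bot] filterlim_tendsto_neg_mult_at_bot[OF tendsto_const]
        filterlim_ident) simp
  show "\<exists>\<delta>>0. \<forall>x. replicator_solution A x \<and> x 0 \<in> rep_simplex \<and> dist (x 0) e < \<delta> \<longrightarrow>
      (x \<longlongrightarrow> e) at_top"
  proof (intro exI[of _ \<delta>] conjI allI impI)
    fix x assume x: "replicator_solution A x \<and> x 0 \<in> rep_simplex \<and> dist (x 0) e < \<delta>"
    have "\<forall>\<^sub>F t in at_top. norm (dist (x t) e) \<le> C * dist (x 0) e * exp (- k * t)"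
      using eventually_ge_at_top[of "0::real"] by eventually_elim (use x bound in auto)
    then have "((\<lambda>t. dist (x t) e) \<longlongrightarrow> 0) at_top"
      by (rule Lim_null_comparison) (intro tendsto_mult_right_zero \<open>(_ \<longlongrightarrow> 0) at_top\<close>)
    then show "(x \<longlongrightarrow> e) at_top"
      by (rule tendsto_dist_iff[THEN iffD2])
  qed (rule \<open>\<delta> > 0\<close>)
qed (use assms in auto)

theorem ESS_imp_replicator_attractor:
  fixes A :: "'i::finite \<Rightarrow> 'i \<Rightarrow> real"
  assumes "ESS A i"
  shows "replicator_attractor A (vertex i)"
proof -
  obtain c \<delta> where c: "c > 0" and "\<delta> > 0"
    and advantage: "\<And>\<pi>. \<pi> \<in> rep_simplex \<Longrightarrow> 1 - \<pi> $ i \<le> \<delta> \<Longrightarrow>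
      c * (1 - \<pi> $ i) \<le> A_vec A i \<pi> - A_avg A \<pi>"
    using ESS_fitness_advantage[OF assms] by blast
  have "dist (x t) (vertex i) \<le> 2 * dist (x 0) (vertex i) * exp (- (c / 2) * t)"
    if sol: "replicator_solution A x" and x0: "x 0 \<in> rep_simplex"
      and near: "dist (x 0) (vertex i) < min (1/2) \<delta>" and "t \<ge> 0" for x t
  proof -
    have "dist (x t) (vertex i) \<le> 2 * (1 - x t $ i)"
      by (rule dist_vertex_le[OF replicator_solution_in_rep_simplex[OF sol x0 \<open>t \<ge> 0\<close>]])
    also have "\<dots> \<le> 2 * ((1 - x 0 $ i) * exp (- (c / 2) * t))"
      using replicator_vertex_gap_decay[where A=A and i=i and c=c and \<delta>=\<delta>,
          OF advantage less_imp_le[OF c] sol x0 _ \<open>t \<ge> 0\<close>]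
        dist_vertex_ge[OF x0, of i] near by simp
    also have "\<dots> \<le> 2 * dist (x 0) (vertex i) * exp (- (c / 2) * t)"
      using dist_vertex_ge[OF x0, of i] by simp
    finally show ?thesis .
  qed
  then show ?thesis
    using c \<open>\<delta> > 0\<close>
    by (intro replicator_attractor_if_exponential_bound[where k="c / 2" and \<delta>="min (1/2) \<delta>" and C=2]
        vertex_in_rep_simplex replicator_vertex) simp_all
qed

theorem theorem4p7:
  fixes T R P S :: real
    and p :: "'i::finite \<Rightarrow> outcome \<Rightarrow> real"
    and x0 :: "'i \<Rightarrow> real"
    and istar :: 'i
  assumes "PD_payoffs T R P S"
    and "\<And>i. memory_one (p i)"
    and "\<And>i. 0 \<le> x0 i \<and> x0 i \<le> 1"
    and "good T R P S (p istar)"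
    and "x0 istar = 1"
    and "\<And>j. j \<noteq> istar \<Longrightarrow> \<not> agreeable (p j)"
  shows "ESS (game_matrix T R P S p x0) istar \<and>
         replicator_attractor (game_matrix T R P S p x0) (vertex istar)"
proof -
  have "ESS (game_matrix T R P S p x0) istar"
    using assms by (rule ESS_if_good)
  then show ?thesis
    using ESS_imp_replicator_attractor by blast
qed

end
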